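(* Let $L:\mathbb{T}^d\times\mathbb{R}^d\to\mathbb{R}$ be continuous and satisfy $\lim_{|v|\to\infty}\inf_{x\in\mathbb{T}^d}L(x,v)/|v|=+\infty$, and let $\varphi:\mathbb{T}^d\to\mathbb{R}$ be Lipschitz continuous. For each $\varkappa>0$ and $x\in\mathbb{T}^d$ let $b_\varkappa[x]$, $p_\varkappa[x]$ be as in the context and choose \[\mathbbm{v}_\varkappa[x]\in\operatorname{Argmax}_{v\in\mathbb{R}^d}\big[-p_\varkappa[x]v-L(x+b_\varkappa[x],v)\big].\] Then there exists a constant $C_3$ such that $|\mathbbm{v}_\varkappa[x]|\le C_3$ for all $\varkappa>0$ and $x\in\mathbb{T}^d$.
   Context: $\mathbb{T}^d=\mathbb{R}^d/\mathbb{Z}^d$; $x+v$ is the translate of $x\in\mathbb{T}^d$ by $v\in\mathbb{R}^d$. $\varphi_\varkappa(x)=\inf\{\varphi(x+v)+\frac{1}{2\varkappa^2}|v|^2: v\in\mathbb{R}^d\}$; $b_\varkappa[x]\in\mathbb{R}^d$ is a chosen vector with $\varphi(x+b_\varkappa[x])+\frac{1}{2\varkappa^2}|b_\varkappa[x]|^2=\varphi_\varkappa(x)$, and $p_\varkappa[x]=\frac{1}{\varkappa^2}(-b_\varkappa[x])^\top$ (a row vector). *)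

theory Defs
  imports "HOL-Analysis.Analysis"
begin

text \<open>The torus T^d = R^d / Z^d is modelled by Z^d-periodic functions on R^d = real^'d.
  Translation x + v on the torus is vector addition.\<close>

definition int_vec :: "real^'d \<Rightarrow> bool" where
  "int_vec z \<longleftrightarrow> (\<forall>i. z $ i \<in> \<int>)"

definition periodic_fun :: "(real^'d \<Rightarrow> 'b) \<Rightarrow> bool" where
  "periodic_fun f \<longleftrightarrow> (\<forall>x z. int_vec z \<longrightarrow> f (x + z) = f x)"

definition phi_kappa :: "(real^'d \<Rightarrow> real) \<Rightarrow> real \<Rightarrow> real^'d \<Rightarrow> real" where
  "phi_kappa \<phi> \<kappa> x = (INF v. \<phi> (x + v) + (norm v)\<^sup>2 / (2 * \<kappa>\<^sup>2))"

definition p_kappa :: "real \<Rightarrow> real^'d \<Rightarrow> real^'d" where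
  "p_kappa \<kappa> b = (1 / \<kappa>\<^sup>2) *\<^sub>R (- b)"

end

theory Submission
  imports Defs
begin

text \<open>Comparing the minimiser \<open>b = b\<^sub>\<kappa>[x]\<close> with \<open>v = 0\<close> and using the Lipschitz bound on \<open>\<phi>\<close>
  gives \<open>|b|\<^sup>2/(2\<kappa>\<^sup>2) \<le> \<phi>(x) - \<phi>(x + b) \<le> K|b|\<close>, so \<open>|p\<^sub>\<kappa>[x]| = |b|/\<kappa>\<^sup>2 \<le> 2K\<close> uniformly in
  \<open>\<kappa>\<close> and \<open>x\<close>. Comparing the maximiser \<open>v\<close> with \<open>v = 0\<close> gives
  \<open>L(x + b, v) \<le> 2K|v| + sup |L(\<cdot>, 0)|\<close>, the supremum being finite by periodicity and continuity;
  superlinearity of \<open>L\<close> allows this only for bounded \<open>v\<close>.\<close>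

lemma periodic_fun_range_eq:
  fixes f :: "real^'d \<Rightarrow> 'b"
  assumes "periodic_fun f"
  shows "range f = f ` cbox 0 1"
proof -
  have "f x \<in> f ` cbox 0 1" for x
  proof
    define z :: "real^'d" where "z = (\<chi> i. of_int \<lfloor>x $ i\<rfloor>)"
    have "int_vec z"
      unfolding int_vec_def z_def by auto
    then show "f x = f (x - z)"
      using assms unfolding periodic_fun_def by (metis diff_add_cancel)
    show "x - z \<in> cbox 0 1"
      unfolding mem_box_cart z_def
      by (auto simp: of_int_floor_le) (smt (verit) real_of_int_floor_add_one_gt)
  qed
  then show ?thesis
    by blast
qed

lemma periodic_fun_bounded:
  fixes f :: "real^'d \<Rightarrow> 'b::metric_space"
  assumes "continuous_on UNIV f" and "periodic_fun f"
  shows "bounded (range f)"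
  unfolding periodic_fun_range_eq[OF assms(2)]
  by (intro compact_imp_bounded compact_continuous_image continuous_on_subset[OF assms(1)])
    auto

lemma lipschitz_on_lower_bound:
  fixes \<phi> :: "'a::real_normed_vector \<Rightarrow> real"
  assumes "K-lipschitz_on UNIV \<phi>"
  shows "\<phi> x - K * norm v \<le> \<phi> (x + v)"
  using lipschitz_onD[OF assms, of "x + v" x] by (simp add: dist_norm abs_le_iff)

lemma phi_kappa_le:
  assumes "K-lipschitz_on UNIV \<phi>" and "\<kappa> \<noteq> 0"
  shows "phi_kappa \<phi> \<kappa> x \<le> \<phi> x"
proof -
  have "\<phi> x - K\<^sup>2 * \<kappa>\<^sup>2 / 2 \<le> \<phi> (x + v) + (norm v)\<^sup>2 / (2 * \<kappa>\<^sup>2)" for v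
  proof -
    have "(norm v)\<^sup>2 / (2 * \<kappa>\<^sup>2) - K * norm v + K\<^sup>2 * \<kappa>\<^sup>2 / 2
        = (norm v - K * \<kappa>\<^sup>2)\<^sup>2 / (2 * \<kappa>\<^sup>2)"
      using assms(2) by (simp add: field_simps power2_eq_square)
    then have "- (K\<^sup>2 * \<kappa>\<^sup>2 / 2) \<le> (norm v)\<^sup>2 / (2 * \<kappa>\<^sup>2) - K * norm v"
      by (smt (verit) divide_nonneg_nonneg zero_le_power2)
    then show ?thesis
      using lipschitz_on_lower_bound[OF assms(1), of x v] by linarith
  qed
  then have "bdd_below (range (\<lambda>v. \<phi> (x + v) + (norm v)\<^sup>2 / (2 * \<kappa>\<^sup>2)))"
    by (rule bdd_belowI2)
  from cINF_lower[OF this, of 0] show ?thesis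
    unfolding phi_kappa_def by simp
qed

lemma lipschitz_proximal_step_norm_le:
  fixes \<phi> :: "'a::real_normed_vector \<Rightarrow> real"
  assumes "K-lipschitz_on UNIV \<phi>" and "\<kappa> \<noteq> 0"
    and "\<phi> (x + b) + (norm b)\<^sup>2 / (2 * \<kappa>\<^sup>2) \<le> \<phi> x"
  shows "norm b \<le> 2 * K * \<kappa>\<^sup>2"
proof -
  have "(norm b)\<^sup>2 / (2 * \<kappa>\<^sup>2) \<le> K * norm b"
    using assms(3) lipschitz_on_lower_bound[OF assms(1), of x b] by linarith
  moreover have "0 < 2 * \<kappa>\<^sup>2"
    using assms(2) by simp
  ultimately have "norm b * norm b \<le> (2 * K * \<kappa>\<^sup>2) * norm b"
    by (simp add: pos_divide_le_eq power2_eq_square mult_ac)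
  then show ?thesis
    using lipschitz_on_nonneg[OF assms(1)]
    by (cases "norm b = 0") (auto simp: mult_le_cancel_right)
qed

lemma norm_p_kappa_le:
  assumes "K-lipschitz_on UNIV \<phi>" and "\<kappa> \<noteq> 0"
    and "\<phi> (x + b) + (norm b)\<^sup>2 / (2 * \<kappa>\<^sup>2) = phi_kappa \<phi> \<kappa> x"
  shows "norm (p_kappa \<kappa> b) \<le> 2 * K"
proof -
  have "norm b \<le> 2 * K * \<kappa>\<^sup>2"
    using assms(3) phi_kappa_le[OF assms(1,2), of x]
    by (intro lipschitz_proximal_step_norm_le[OF assms(1,2), of x]) simp
  then show ?thesis
    using assms(2) by (simp add: p_kappa_def divide_le_eq)
qed

lemma superlinear_affine_sublevel_bounded:
  fixes g :: "'a::real_normed_vector \<Rightarrow> real"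
  assumes "filterlim (\<lambda>v. g v / norm v) at_top at_infinity"
  obtains C where "\<And>v. g v \<le> A * norm v + B \<Longrightarrow> norm v \<le> C"
proof -
  have "eventually (\<lambda>v. \<bar>A\<bar> + \<bar>B\<bar> + 1 \<le> g v / norm v) at_infinity"
    using assms by (simp add: filterlim_at_top)
  then obtain R where R: "\<And>v. R \<le> norm v \<Longrightarrow> \<bar>A\<bar> + \<bar>B\<bar> + 1 \<le> g v / norm v"
    unfolding eventually_at_infinity by blast
  have "norm v \<le> max R 1" if v: "g v \<le> A * norm v + B" for v
  proof (rule ccontr)
    assume "\<not> norm v \<le> max R 1"
    then have "R < norm v" and "1 < norm v"
      by auto
    then have "\<bar>A\<bar> + \<bar>B\<bar> + 1 \<le> g v / norm v" and "0 < norm v"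
      using R by auto
    then have "(\<bar>A\<bar> + \<bar>B\<bar> + 1) * norm v \<le> g v"
      by (metis pos_le_divide_eq)
    moreover have "A * norm v + B < (\<bar>A\<bar> + \<bar>B\<bar> + 1) * norm v"
      using mult_right_mono[OF abs_ge_self[of A], of "norm v"] mult_left_mono[of 1 "norm v" "\<bar>B\<bar>"]
        \<open>1 < norm v\<close>
      by (simp add: distrib_right)
    ultimately show False
      using v by linarith
  qed
  with that show ?thesis
    by blast
qed

theorem proposition5:
  fixes L :: "real^'d \<Rightarrow> real^'d \<Rightarrow> real"
    and \<phi> :: "real^'d \<Rightarrow> real"
    and b :: "real \<Rightarrow> real^'d \<Rightarrow> real^'d"
    and V :: "real \<Rightarrow> real^'d \<Rightarrow> real^'d"
  assumes L_cont: "continuous_on UNIV (\<lambda>(x, v). L x v)"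
    and L_per: "\<forall>v. periodic_fun (\<lambda>x. L x v)"
    and L_superlin: "filterlim (\<lambda>v. (INF x. L x v) / norm v) at_top at_infinity"
    and phi_per: "periodic_fun \<phi>"
    and phi_lip: "\<exists>K. K-lipschitz_on UNIV \<phi>"
    and b_min: "\<forall>\<kappa>>0. \<forall>x. \<phi> (x + b \<kappa> x) + (norm (b \<kappa> x))\<^sup>2 / (2 * \<kappa>\<^sup>2) = phi_kappa \<phi> \<kappa> x"
    and V_argmax: "\<forall>\<kappa>>0. \<forall>x. \<forall>w.
        - (p_kappa \<kappa> (b \<kappa> x) \<bullet> w) - L (x + b \<kappa> x) w
          \<le> - (p_kappa \<kappa> (b \<kappa> x) \<bullet> V \<kappa> x) - L (x + b \<kappa> x) (V \<kappa> x)"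
  shows "\<exists>C3. \<forall>\<kappa>>0. \<forall>x. norm (V \<kappa> x) \<le> C3"
proof -
  obtain K where K: "K-lipschitz_on UNIV \<phi>"
    using phi_lip by blast
  have "continuous_on UNIV (\<lambda>x. L x v)" for v
    using continuous_on_compose2[OF L_cont continuous_on_Pair[OF continuous_on_id continuous_on_const,
          of UNIV v]]
    by auto
  then have L_bounded: "bounded (range (\<lambda>x. L x v))" for v
    using L_per periodic_fun_bounded by blast
  obtain M where M: "\<And>x. \<bar>L x 0\<bar> \<le> M"
    using L_bounded[of 0] unfolding bounded_real by auto
  obtain C where C: "\<And>v. (INF x. L x v) \<le> 2 * K * norm v + M \<Longrightarrow> norm v \<le> C"
    using superlinear_affine_sublevel_bounded[OF L_superlin] by blast
  have "norm (V \<kappa> x) \<le> C" if "\<kappa> > 0" for \<kappa> x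
  proof (rule C)
    let ?p = "p_kappa \<kappa> (b \<kappa> x)" and ?y = "x + b \<kappa> x" and ?v = "V \<kappa> x"
    have "norm ?p \<le> 2 * K"
      using b_min \<open>\<kappa> > 0\<close> by (intro norm_p_kappa_le[OF K]) auto
    then have "- (?p \<bullet> ?v) \<le> 2 * K * norm ?v"
      using norm_cauchy_schwarz[of "- ?p" ?v] by (simp add: mult_right_mono order_trans)
    moreover have "- (?p \<bullet> 0) - L ?y 0 \<le> - (?p \<bullet> ?v) - L ?y ?v"
      using V_argmax \<open>\<kappa> > 0\<close> by blast
    moreover have "(INF z. L z ?v) \<le> L ?y ?v"
      using L_bounded[of ?v] by (intro cINF_lower bounded_imp_bdd_below) auto
    ultimately show "(INF z. L z ?v) \<le> 2 * K * norm ?v + M"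
      using M[of ?y] by simp
  qed
  then show ?thesis
    by blast
qed

end
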